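(* Let $\mathcal{G}^1$ and $\mathcal{G}^2$ be any two edge-featured graphs (as described in the context). If the 1-WL algorithm distinguishes $\mathcal{G}^1$ and $\mathcal{G}^2$, then the E-WL algorithm also distinguishes $\mathcal{G}^1$ and $\mathcal{G}^2$. That is, the discriminative power of the E-WL algorithm is either equal to or greater than that of the 1-WL algorithm.
   Context: An edge-featured graph is $\mathcal{G}=(\mathcal{V},\mathcal{E},\mathcal{X}_V,\mathcal{X}_E)$: a finite undirected graph with no self-loops and no isolated nodes, where each node $n_i\in\mathcal{V}$ carries a discrete feature $x^n_i$ and each edge $e_{i,j}\in\mathcal{E}$ (joining $n_i$ and $n_j$) carries a discrete feature $x^e_{i,j}=x^e_{j,i}$. Write $\mathcal{N}_{(i)}$ for the set of neighbours of $n_i$, and $\{\{\cdot\}\}$ for a multiset. Both algorithms below are run on the two graphs simultaneously with the same injective function $HASH$ (so equal inputs give equal outputs and distinct inputs give distinct outputs, across both graphs). 1-WL: $c^{(0)}_i=x^n_i$ and $c^{(l)}_i=HASH\big(c^{(l-1)}_i,\{\{c^{(l-1)}_j : n_j\in\mathcal{N}_{(i)}\}\}\big)$. E-WL (Edged Weisfeiler–Lehman): $c^{(0)}_i=x^n_i$ and $c^{(l)}_i=HASH\big(c^{(l-1)}_i,T^{(l)}_i\big)$ where $T^{(l)}_i=\{\{(c^{(l-1)}_j,x^e_{i,j}) : n_j\in\mathcal{N}_{(i)}\}\}$ is the multiset of ordered pairs ("Node–Edge tuples") of neighbour colour and connecting edge feature. For either algorithm, iteration continues until the colours stabilize; the output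 for a graph is the multiset of node colours $\{\{c^{(l)}_i : n_i\in\mathcal{V}\}\}$. The algorithm distinguishes two graphs (declares them non-isomorphic) if the multisets of node colours of the two graphs differ (at some iteration $l$). *)

theory Defs
  imports Main "HOL-Library.Multiset"
begin

text \<open>An edge-featured graph over vertex type 'v: vertex set V, adjacency relation E,
  node features xn (discrete values, identified with level-0 colours of type 'c),
  edge features xe.\<close>

definition edge_featured_graph ::
  "'v set \<Rightarrow> ('v \<Rightarrow> 'v \<Rightarrow> bool) \<Rightarrow> ('v \<Rightarrow> 'v \<Rightarrow> 'e) \<Rightarrow> bool" where
  "edge_featured_graph V E xe \<longleftrightarrow>
     finite V
   \<and> (\<forall>i j. E i j \<longrightarrow> i \<in> V \<and> j \<in> V)
   \<and> (\<forall>i j. E i j \<longrightarrow> E j i)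
   \<and> (\<forall>i. \<not> E i i)
   \<and> (\<forall>i\<in>V. \<exists>j. E i j)
   \<and> (\<forall>i j. E i j \<longrightarrow> xe i j = xe j i)"

definition nbrs :: "'v set \<Rightarrow> ('v \<Rightarrow> 'v \<Rightarrow> bool) \<Rightarrow> 'v \<Rightarrow> 'v set" where
  "nbrs V E i = {j \<in> V. E i j}"

fun wl1_col ::
  "('c \<times> 'c multiset \<Rightarrow> 'c) \<Rightarrow> 'v set \<Rightarrow> ('v \<Rightarrow> 'v \<Rightarrow> bool) \<Rightarrow> ('v \<Rightarrow> 'c)
   \<Rightarrow> nat \<Rightarrow> 'v \<Rightarrow> 'c" where
  "wl1_col h V E xn 0 i = xn i"
| "wl1_col h V E xn (Suc l) i =
     h (wl1_col h V E xn l i, image_mset (wl1_col h V E xn l) (mset_set (nbrs V E i)))"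

fun ewl_col ::
  "('c \<times> ('c \<times> 'e) multiset \<Rightarrow> 'c) \<Rightarrow> 'v set \<Rightarrow> ('v \<Rightarrow> 'v \<Rightarrow> bool) \<Rightarrow> ('v \<Rightarrow> 'c)
   \<Rightarrow> ('v \<Rightarrow> 'v \<Rightarrow> 'e) \<Rightarrow> nat \<Rightarrow> 'v \<Rightarrow> 'c" where
  "ewl_col h V E xn xe 0 i = xn i"
| "ewl_col h V E xn xe (Suc l) i =
     h (ewl_col h V E xn xe l i,
        image_mset (\<lambda>j. (ewl_col h V E xn xe l j, xe i j)) (mset_set (nbrs V E i)))"

definition wl1_output where
  "wl1_output h V E xn l = image_mset (wl1_col h V E xn l) (mset_set V)"

definition ewl_output where
  "ewl_output h V E xn xe l = image_mset (ewl_col h V E xn xe l) (mset_set V)"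

definition wl1_distinguishes where
  "wl1_distinguishes h V1 E1 xn1 V2 E2 xn2 \<longleftrightarrow>
     (\<exists>l. wl1_output h V1 E1 xn1 l \<noteq> wl1_output h V2 E2 xn2 l)"

definition ewl_distinguishes where
  "ewl_distinguishes h V1 E1 xn1 xe1 V2 E2 xn2 xe2 \<longleftrightarrow>
     (\<exists>l. ewl_output h V1 E1 xn1 xe1 l \<noteq> ewl_output h V2 E2 xn2 xe2 l)"

end

theory Submission
  imports Defs
begin

text \<open>E-WL colours refine 1-WL colours, jointly across the two graphs: by induction on
  the iteration, two nodes with equal E-WL colour have equal 1-WL colour. Equal E-WL
  colours at the next step force (by injectivity of the E-WL hash) equal previous
  colours and equal multisets of Node-Edge tuples; forgetting the edge features and
  refining each neighbour colour by the induction hypothesis gives equal 1-WL neighbour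
  multisets.\<close>

lemma mem_mset_set_imp_mem: "x \<in># mset_set A \<Longrightarrow> x \<in> A"
  by (cases "finite A") auto

lemma image_mset_eq_if_refines:
  assumes "image_mset f M = image_mset g N"
    and "\<And>x y. x \<in># M \<Longrightarrow> y \<in># N \<Longrightarrow> f x = g y \<Longrightarrow> f' x = g' y"
  shows "image_mset f' M = image_mset g' N"
  using assms
proof (induction M arbitrary: N)
  case empty
  then show ?case by simp
next
  case (add x M)
  have "f x \<in># image_mset g N"
    using add.prems(1) by (metis union_single_eq_member image_mset_add_mset)
  then obtain y where y: "y \<in># N" "g y = f x" by auto
  then have N: "N = add_mset y (N - {#y#})" by simp
  have "image_mset g N = add_mset (f x) (image_mset g (N - {#y#}))"
    using N y(2) by (metis image_mset_add_mset)
  then have rest: "image_mset f M = image_mset g (N - {#y#})"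
    using add.prems(1) by simp
  have "image_mset f' M = image_mset g' (N - {#y#})"
    by (rule add.IH[OF rest]) (auto intro: add.prems(2) dest: in_diffD)
  moreover have "f' x = g' y"
    using add.prems(2) y by simp
  ultimately show ?case by (subst N) simp
qed

lemma ewl_col_eq_imp_wl1_col_eq:
  assumes "inj hE"
    and "i \<in> Va" and "j \<in> Vb"
    and "ewl_col hE Va Ea xna xea l i = ewl_col hE Vb Eb xnb xeb l j"
  shows "wl1_col h1 Va Ea xna l i = wl1_col h1 Vb Eb xnb l j"
  using assms(2-4)
proof (induction l arbitrary: i j)
  case 0
  then show ?case by simp
next
  case (Suc l)
  let ?Ni = "mset_set (nbrs Va Ea i)" and ?Nj = "mset_set (nbrs Vb Eb j)"
  have prev: "ewl_col hE Va Ea xna xea l i = ewl_col hE Vb Eb xnb xeb l j"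
    and tuples: "image_mset (\<lambda>k. (ewl_col hE Va Ea xna xea l k, xea i k)) ?Ni
               = image_mset (\<lambda>k. (ewl_col hE Vb Eb xnb xeb l k, xeb j k)) ?Nj"
    using Suc.prems(3) injD[OF assms(1)] by auto
  have "image_mset (ewl_col hE Va Ea xna xea l) ?Ni = image_mset (ewl_col hE Vb Eb xnb xeb l) ?Nj"
    using arg_cong[OF tuples, of "image_mset fst"] by (simp add: multiset.map_comp o_def)
  then have "image_mset (wl1_col h1 Va Ea xna l) ?Ni = image_mset (wl1_col h1 Vb Eb xnb l) ?Nj"
    by (rule image_mset_eq_if_refines)
      (auto intro: Suc.IH dest!: mem_mset_set_imp_mem simp: nbrs_def)
  with Suc.IH[OF Suc.prems(1,2) prev] show ?case by simp
qed

lemma ewl_output_eq_imp_wl1_output_eq: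
  assumes "inj hE"
    and "ewl_output hE V1 E1 xn1 xe1 l = ewl_output hE V2 E2 xn2 xe2 l"
  shows "wl1_output h1 V1 E1 xn1 l = wl1_output h1 V2 E2 xn2 l"
  using assms(2) unfolding wl1_output_def ewl_output_def
  by (rule image_mset_eq_if_refines)
    (auto intro: ewl_col_eq_imp_wl1_col_eq[OF assms(1)] dest!: mem_mset_set_imp_mem)

theorem theorem1:
  fixes V1 :: "'v1 set" and E1 :: "'v1 \<Rightarrow> 'v1 \<Rightarrow> bool"
    and xn1 :: "'v1 \<Rightarrow> 'c" and xe1 :: "'v1 \<Rightarrow> 'v1 \<Rightarrow> 'e"
    and V2 :: "'v2 set" and E2 :: "'v2 \<Rightarrow> 'v2 \<Rightarrow> bool"
    and xn2 :: "'v2 \<Rightarrow> 'c" and xe2 :: "'v2 \<Rightarrow> 'v2 \<Rightarrow> 'e"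
    and h1 :: "'c \<times> 'c multiset \<Rightarrow> 'c"
    and hE :: "'c \<times> ('c \<times> 'e) multiset \<Rightarrow> 'c"
  assumes "edge_featured_graph V1 E1 xe1"
    and "edge_featured_graph V2 E2 xe2"
    and "inj h1"
    and "inj hE"
    and "wl1_distinguishes h1 V1 E1 xn1 V2 E2 xn2"
  shows "ewl_distinguishes hE V1 E1 xn1 xe1 V2 E2 xn2 xe2"
  using assms(5) ewl_output_eq_imp_wl1_output_eq[OF assms(4)]
  unfolding wl1_distinguishes_def ewl_distinguishes_def by blast

end
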